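(* Let $R$ be a ring with identity, ${}_RM$ a left $R$-module, $\varphi\in\mathrm{Hom}_R(M,M)$, and $r\ge1$ an integer such that $\ker(\varphi^r)\oplus\mathrm{im}(\varphi^r)=M$. Let $\varphi_1=\varphi\restriction\ker(\varphi^r)$ and $\varphi_2=\varphi\restriction\mathrm{im}(\varphi^r)$. Then there is an isomorphism of $Z(R)$-algebras $C_\varphi\cong C_{\varphi_1}\times C_{\varphi_2}$, where $C_\varphi\subseteq\mathrm{Hom}_R(M,M)$, $C_{\varphi_1}\subseteq\mathrm{Hom}_R(\ker(\varphi^r),\ker(\varphi^r))$ and $C_{\varphi_2}\subseteq\mathrm{Hom}_R(\mathrm{im}(\varphi^r),\mathrm{im}(\varphi^r))$ are the respective centralizers.
   Context: For an endomorphism $\alpha$ of a module $N$, $C_\alpha=\{\psi\in\mathrm{Hom}_R(N,N)\mid\psi\circ\alpha=\alpha\circ\psi\}$. $Z(R)$ is the centre of $R$. Note $\varphi$ maps $\ker(\varphi^r)$ and $\mathrm{im}(\varphi^r)$ into themselves. *)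

theory Defs
  imports Main
begin

definition left_module :: "('r::ring_1 \<Rightarrow> 'm::ab_group_add \<Rightarrow> 'm) \<Rightarrow> bool" where
  "left_module sm \<longleftrightarrow>
     (\<forall>a x y. sm a (x + y) = sm a x + sm a y) \<and>
     (\<forall>a b x. sm (a + b) x = sm a x + sm b x) \<and>
     (\<forall>a b x. sm (a * b) x = sm a (sm b x)) \<and>
     (\<forall>x. sm 1 x = x)"

definition submodule :: "('r::ring_1 \<Rightarrow> 'm::ab_group_add \<Rightarrow> 'm) \<Rightarrow> 'm set \<Rightarrow> bool" where
  "submodule sm N \<longleftrightarrow> 0 \<in> N \<and> (\<forall>x\<in>N. \<forall>y\<in>N. x + y \<in> N) \<and> (\<forall>a. \<forall>x\<in>N. sm a x \<in> N)"

text \<open>Hom_R(N,N) for a submodule N: R-linear maps N \<rightarrow> N, represented extensionally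
  (value 0 outside N) so that each endomorphism has a unique representative.\<close>

definition End_R :: "('r::ring_1 \<Rightarrow> 'm::ab_group_add \<Rightarrow> 'm) \<Rightarrow> 'm set \<Rightarrow> ('m \<Rightarrow> 'm) set" where
  "End_R sm N = {f. (\<forall>x\<in>N. f x \<in> N) \<and>
                    (\<forall>x\<in>N. \<forall>y\<in>N. f (x + y) = f x + f y) \<and>
                    (\<forall>a. \<forall>x\<in>N. f (sm a x) = sm a (f x)) \<and>
                    (\<forall>x. x \<notin> N \<longrightarrow> f x = 0)}"

definition centralizer :: "('r::ring_1 \<Rightarrow> 'm::ab_group_add \<Rightarrow> 'm) \<Rightarrow> 'm set \<Rightarrow> ('m \<Rightarrow> 'm) \<Rightarrow> ('m \<Rightarrow> 'm) set" where
  "centralizer sm N \<alpha> = {\<psi> \<in> End_R sm N. \<forall>x\<in>N. \<psi> (\<alpha> x) = \<alpha> (\<psi> x)}"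

definition restr :: "'m set \<Rightarrow> ('m \<Rightarrow> 'm::zero) \<Rightarrow> ('m \<Rightarrow> 'm)" where
  "restr N f = (\<lambda>x. if x \<in> N then f x else 0)"

definition e_add :: "'m set \<Rightarrow> ('m \<Rightarrow> 'm::ab_group_add) \<Rightarrow> ('m \<Rightarrow> 'm) \<Rightarrow> ('m \<Rightarrow> 'm)" where
  "e_add N f g = (\<lambda>x. if x \<in> N then f x + g x else 0)"

definition e_mult :: "'m set \<Rightarrow> ('m \<Rightarrow> 'm::ab_group_add) \<Rightarrow> ('m \<Rightarrow> 'm) \<Rightarrow> ('m \<Rightarrow> 'm)" where
  "e_mult N f g = (\<lambda>x. if x \<in> N then f (g x) else 0)"

definition e_one :: "'m set \<Rightarrow> ('m \<Rightarrow> 'm::ab_group_add)" where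
  "e_one N = (\<lambda>x. if x \<in> N then x else 0)"

definition e_smult :: "('r::ring_1 \<Rightarrow> 'm::ab_group_add \<Rightarrow> 'm) \<Rightarrow> 'm set \<Rightarrow> 'r \<Rightarrow> ('m \<Rightarrow> 'm) \<Rightarrow> ('m \<Rightarrow> 'm)" where
  "e_smult sm N z f = (\<lambda>x. if x \<in> N then sm z (f x) else 0)"

definition ring_center :: "'r::ring_1 set" where
  "ring_center = {z. \<forall>a. z * a = a * z}"

definition Zalg_iso_prod ::
  "('r::ring_1 \<Rightarrow> 'm::ab_group_add \<Rightarrow> 'm) \<Rightarrow> 'm set \<Rightarrow> ('m \<Rightarrow> 'm) set \<Rightarrow>
   'm set \<Rightarrow> ('m \<Rightarrow> 'm) set \<Rightarrow> 'm set \<Rightarrow> ('m \<Rightarrow> 'm) set \<Rightarrow> bool" where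
  "Zalg_iso_prod sm N C N1 C1 N2 C2 \<longleftrightarrow>
    (\<exists>\<Phi>. bij_betw \<Phi> C (C1 \<times> C2) \<and>
      (\<forall>f\<in>C. \<forall>g\<in>C. \<Phi> (e_add N f g) =
           (e_add N1 (fst (\<Phi> f)) (fst (\<Phi> g)), e_add N2 (snd (\<Phi> f)) (snd (\<Phi> g)))) \<and>
      (\<forall>f\<in>C. \<forall>g\<in>C. \<Phi> (e_mult N f g) =
           (e_mult N1 (fst (\<Phi> f)) (fst (\<Phi> g)), e_mult N2 (snd (\<Phi> f)) (snd (\<Phi> g)))) \<and>
      \<Phi> (e_one N) = (e_one N1, e_one N2) \<and>
      (\<forall>z\<in>ring_center. \<forall>f\<in>C. \<Phi> (e_smult sm N z f) =
           (e_smult sm N1 z (fst (\<Phi> f)), e_smult sm N2 z (snd (\<Phi> f)))))"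

end

theory Submission
  imports Defs
begin

text \<open>If \<open>M = K \<oplus> I\<close> and every endomorphism commuting with \<open>\<phi>\<close> maps \<open>K\<close> and \<open>I\<close> into
  themselves, then \<open>f \<mapsto> (f\<restriction>K, f\<restriction>I)\<close> is an algebra isomorphism \<open>C\<^sub>\<phi> \<cong> C\<^sub>\<phi>\<^sub>1 \<times> C\<^sub>\<phi>\<^sub>2\<close>; its inverse
  glues \<open>(g, h)\<close> to \<open>x \<mapsto> g (\<pi> x) + h (x - \<pi> x)\<close>, where \<open>\<pi>\<close> is the projection onto \<open>K\<close> along
  \<open>I\<close>. For \<open>K = ker \<phi>\<^sup>r\<close> and \<open>I = im \<phi>\<^sup>r\<close> the invariance holds because a map commuting with
  \<open>\<phi>\<close> commutes with \<open>\<phi>\<^sup>r\<close>.\<close>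

lemma left_module_add: "left_module sm \<Longrightarrow> sm a (x + y) = sm a x + sm a y"
  by (simp add: left_module_def)

lemma left_module_zero: "left_module sm \<Longrightarrow> sm a 0 = 0"
  using left_module_add[of sm a 0 0] by simp

lemma left_module_diff: "left_module sm \<Longrightarrow> sm a (x - y) = sm a x - sm a y"
  using left_module_add[of sm a "x - y" y] by (simp add: algebra_simps)

lemma left_module_zero_scalar: "left_module sm \<Longrightarrow> sm 0 x = 0"
  using left_module_def[of sm] by (metis add_cancel_left_left add.right_neutral)

lemma left_module_minus_one: "left_module sm \<Longrightarrow> sm (- 1) x = - x"
proof -
  assume lm: "left_module sm"
  then have "sm (- 1) x + x = sm (- 1 + 1) x"
    unfolding left_module_def by metis
  also have "\<dots> = 0"
    using left_module_zero_scalar[OF lm] by simp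
  finally show ?thesis by (simp add: eq_neg_iff_add_eq_0)
qed

lemma submodule_diff:
  assumes "left_module sm" "submodule sm N" "x \<in> N" "y \<in> N"
  shows "x - y \<in> N"
  using assms left_module_minus_one[of sm y] unfolding submodule_def
  by (metis diff_conv_add_uminus)

lemma End_R_UNIV_add: "f \<in> End_R sm UNIV \<Longrightarrow> f (x + y) = f x + f y"
  by (simp add: End_R_def)

lemma End_R_UNIV_diff: "f \<in> End_R sm UNIV \<Longrightarrow> f (x - y) = f x - f y"
  using End_R_UNIV_add[of f sm "x - y" y] by (simp add: algebra_simps)

lemma End_R_zero: "f \<in> End_R sm N \<Longrightarrow> 0 \<in> N \<Longrightarrow> f 0 = 0"
  unfolding End_R_def using add_cancel_right_right[of "f 0" "f 0"] by force

lemma funpow_End_R_UNIV: "f \<in> End_R sm UNIV \<Longrightarrow> f ^^ n \<in> End_R sm UNIV"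
  by (induction n) (auto simp: End_R_def)

lemma submodule_kernel:
  "left_module sm \<Longrightarrow> f \<in> End_R sm UNIV \<Longrightarrow> submodule sm {x. f x = 0}"
  using End_R_zero[of f sm UNIV] by (auto simp: submodule_def End_R_def left_module_zero)

lemma submodule_range:
  assumes f: "f \<in> End_R sm UNIV"
  shows "submodule sm (range f)"
  unfolding submodule_def
proof (intro conjI ballI allI)
  show "0 \<in> range f"
    using End_R_zero[OF f UNIV_I] by (metis rangeI)
next
  fix u v assume "u \<in> range f" "v \<in> range f"
  then obtain x y where "u = f x" "v = f y" by blast
  then show "u + v \<in> range f"
    using End_R_UNIV_add[OF f, of x y] by (metis rangeI)
next
  fix a u assume "u \<in> range f"
  then obtain x where "u = f x" by blast
  moreover have "f (sm a x) = sm a (f x)"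
    using f by (simp add: End_R_def)
  ultimately show "sm a u \<in> range f" by (metis rangeI)
qed

lemma commute_funpow: "(\<And>x. f (\<phi> x) = \<phi> (f x)) \<Longrightarrow> f ((\<phi> ^^ n) x) = (\<phi> ^^ n) (f x)"
  by (induction n) auto

lemma centralizer_kernel_funpow_closed:
  "f \<in> centralizer sm UNIV \<phi> \<Longrightarrow> (\<phi> ^^ n) x = 0 \<Longrightarrow> (\<phi> ^^ n) (f x) = 0"
  using commute_funpow[of f \<phi> n x] End_R_zero[of f sm UNIV] by (simp add: centralizer_def)

lemma centralizer_range_funpow_closed:
  "f \<in> centralizer sm UNIV \<phi> \<Longrightarrow> y \<in> range (\<phi> ^^ n) \<Longrightarrow> f y \<in> range (\<phi> ^^ n)"
  using commute_funpow[of f \<phi> n] by (auto simp: centralizer_def)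

lemma centralizer_restr:
  assumes "\<forall>x\<in>N. \<phi> x \<in> N"
  shows "centralizer sm N (restr N \<phi>) = {g \<in> End_R sm N. \<forall>x\<in>N. g (\<phi> x) = \<phi> (g x)}"
  using assms by (auto simp: centralizer_def End_R_def restr_def)

lemma restr_End_R:
  assumes "f \<in> End_R sm UNIV" "submodule sm N" "\<forall>x\<in>N. f x \<in> N"
  shows "restr N f \<in> End_R sm N"
  using assms by (auto simp: End_R_def restr_def submodule_def)

lemma restr_eq_iff: "restr N f = restr N g \<longleftrightarrow> (\<forall>x\<in>N. f x = g x)"
  by (auto simp: fun_eq_iff restr_def)

lemma restr_e_add: "restr N (e_add UNIV f g) = e_add N (restr N f) (restr N g)"
  by (simp add: fun_eq_iff restr_def e_add_def)

lemma restr_e_mult: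
  "\<forall>x\<in>N. g x \<in> N \<Longrightarrow> restr N (e_mult UNIV f g) = e_mult N (restr N f) (restr N g)"
  by (simp add: fun_eq_iff restr_def e_mult_def)

lemma restr_e_one: "restr N (e_one UNIV) = e_one N"
  by (simp add: fun_eq_iff restr_def e_one_def)

lemma restr_e_smult: "restr N (e_smult sm UNIV z f) = e_smult sm N z (restr N f)"
  by (simp add: fun_eq_iff restr_def e_smult_def)

locale module_decomposition =
  fixes sm :: "'r::ring_1 \<Rightarrow> 'm::ab_group_add \<Rightarrow> 'm" and K I :: "'m set"
  assumes left_module: "left_module sm"
    and submodule_K: "submodule sm K" and submodule_I: "submodule sm I"
    and summands_disjoint: "K \<inter> I = {0}"
    and summands_span: "\<forall>x. \<exists>a\<in>K. \<exists>b\<in>I. x = a + b"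
begin

definition proj :: "'m \<Rightarrow> 'm" where
  "proj x = (SOME a. a \<in> K \<and> x - a \<in> I)"

lemma proj_mem: "proj x \<in> K" and diff_proj_mem: "x - proj x \<in> I"
proof -
  obtain a b where "a \<in> K" "b \<in> I" "x = a + b"
    using summands_span by blast
  then have "a \<in> K \<and> x - a \<in> I" by simp
  then have "proj x \<in> K \<and> x - proj x \<in> I"
    unfolding proj_def by (rule someI)
  then show "proj x \<in> K" "x - proj x \<in> I" by simp_all
qed

lemma proj_unique:
  assumes "a \<in> K" "x - a \<in> I"
  shows "proj x = a"
proof -
  have "proj x - a \<in> K"
    using submodule_diff[OF left_module submodule_K proj_mem assms(1)] .
  moreover have "(x - a) - (x - proj x) \<in> I"
    using submodule_diff[OF left_module submodule_I assms(2) diff_proj_mem] .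
  then have "proj x - a \<in> I" by simp
  ultimately have "proj x - a = 0" using summands_disjoint by blast
  then show ?thesis by simp
qed

lemma proj_on_K: "x \<in> K \<Longrightarrow> proj x = x"
  using submodule_I by (intro proj_unique) (simp_all add: submodule_def)

lemma proj_on_I: "x \<in> I \<Longrightarrow> proj x = 0"
  using submodule_K by (intro proj_unique) (simp_all add: submodule_def)

lemma proj_commute:
  assumes "f \<in> End_R sm UNIV" "\<forall>x\<in>K. f x \<in> K" "\<forall>x\<in>I. f x \<in> I"
  shows "proj (f x) = f (proj x)"
proof (rule proj_unique)
  show "f (proj x) \<in> K" using assms(2) proj_mem by blast
  have "f x - f (proj x) = f (x - proj x)" using End_R_UNIV_diff[OF assms(1)] by simp
  then show "f x - f (proj x) \<in> I" using assms(3) diff_proj_mem by simp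
qed

lemma proj_add: "proj (x + y) = proj x + proj y"
proof (rule proj_unique)
  show "proj x + proj y \<in> K"
    using submodule_K proj_mem by (simp add: submodule_def)
  have "(x - proj x) + (y - proj y) \<in> I"
    using submodule_I diff_proj_mem by (simp add: submodule_def)
  then show "x + y - (proj x + proj y) \<in> I"
    by (simp add: algebra_simps)
qed

lemma proj_smult: "proj (sm c x) = sm c (proj x)"
proof (rule proj_unique)
  show "sm c (proj x) \<in> K"
    using submodule_K proj_mem by (simp add: submodule_def)
  have "sm c x - sm c (proj x) = sm c (x - proj x)"
    using left_module_diff[OF left_module] by simp
  then show "sm c x - sm c (proj x) \<in> I"
    using submodule_I diff_proj_mem by (simp add: submodule_def)
qed

lemma End_R_eqI:
  assumes "f \<in> End_R sm UNIV" "g \<in> End_R sm UNIV"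
    and "\<forall>x\<in>K. f x = g x" "\<forall>x\<in>I. f x = g x"
  shows "f = g"
proof
  fix x
  have "f x = f (proj x) + f (x - proj x)" "g x = g (proj x) + g (x - proj x)"
    using End_R_UNIV_add[OF assms(1)] End_R_UNIV_add[OF assms(2)]
    by (metis diff_add_cancel add.commute)+
  then show "f x = g x" using assms(3,4) proj_mem diff_proj_mem by simp
qed

definition glue :: "('m \<Rightarrow> 'm) \<Rightarrow> ('m \<Rightarrow> 'm) \<Rightarrow> 'm \<Rightarrow> 'm" where
  "glue g h x = g (proj x) + h (x - proj x)"

lemma glue_End_R:
  assumes g: "g \<in> End_R sm K" and h: "h \<in> End_R sm I"
  shows "glue g h \<in> End_R sm UNIV"
proof -
  have "glue g h (x + y) = glue g h x + glue g h y" for x y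
  proof -
    have "x + y - (proj x + proj y) = (x - proj x) + (y - proj y)"
      by simp
    then have "glue g h (x + y) = g (proj x + proj y) + h ((x - proj x) + (y - proj y))"
      by (simp only: glue_def proj_add)
    also have "\<dots> = glue g h x + glue g h y"
    proof -
      have "g (proj x + proj y) = g (proj x) + g (proj y)"
        using g proj_mem by (simp add: End_R_def)
      moreover have "h ((x - proj x) + (y - proj y)) = h (x - proj x) + h (y - proj y)"
        using h diff_proj_mem by (simp add: End_R_def)
      ultimately show ?thesis
        unfolding glue_def by (simp add: ac_simps)
    qed
    finally show ?thesis .
  qed
  moreover have "glue g h (sm c x) = sm c (glue g h x)" for c x
  proof -
    have "glue g h (sm c x) = g (sm c (proj x)) + h (sm c (x - proj x))"
      unfolding glue_def proj_smult by (simp add: left_module_diff[OF left_module])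
    also have "\<dots> = sm c (g (proj x)) + sm c (h (x - proj x))"
      using g h proj_mem diff_proj_mem by (simp add: End_R_def)
    also have "\<dots> = sm c (glue g h x)"
      using left_module unfolding glue_def left_module_def by simp
    finally show ?thesis .
  qed
  ultimately show ?thesis by (simp add: End_R_def)
qed

lemma restr_glue_K: "g \<in> End_R sm K \<Longrightarrow> h \<in> End_R sm I \<Longrightarrow> restr K (glue g h) = g"
  using submodule_I proj_on_K End_R_zero[of h sm I]
  by (auto simp: fun_eq_iff restr_def glue_def End_R_def submodule_def)

lemma restr_glue_I: "g \<in> End_R sm K \<Longrightarrow> h \<in> End_R sm I \<Longrightarrow> restr I (glue g h) = h"
  using submodule_K proj_on_I End_R_zero[of g sm K]
  by (auto simp: fun_eq_iff restr_def glue_def End_R_def submodule_def)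

lemma glue_commute:
  assumes "\<phi> \<in> End_R sm UNIV" "\<forall>x\<in>K. \<phi> x \<in> K" "\<forall>x\<in>I. \<phi> x \<in> I"
    and "\<forall>x\<in>K. g (\<phi> x) = \<phi> (g x)" "\<forall>x\<in>I. h (\<phi> x) = \<phi> (h x)"
  shows "glue g h (\<phi> x) = \<phi> (glue g h x)"
proof -
  have "glue g h (\<phi> x) = g (\<phi> (proj x)) + h (\<phi> (x - proj x))"
    unfolding glue_def proj_commute[OF assms(1-3)] by (simp add: End_R_UNIV_diff[OF assms(1)])
  also have "\<dots> = \<phi> (glue g h x)"
    using assms(1,4,5) proj_mem diff_proj_mem unfolding glue_def End_R_def by simp
  finally show ?thesis .
qed

theorem centralizer_iso_prod:
  assumes \<phi>: "\<phi> \<in> End_R sm UNIV"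
    and invariant: "\<forall>f\<in>centralizer sm UNIV \<phi>. (\<forall>x\<in>K. f x \<in> K) \<and> (\<forall>x\<in>I. f x \<in> I)"
  shows "Zalg_iso_prod sm UNIV (centralizer sm UNIV \<phi>)
           K (centralizer sm K (restr K \<phi>)) I (centralizer sm I (restr I \<phi>))"
proof -
  let ?C = "centralizer sm UNIV \<phi>"
  let ?C1 = "centralizer sm K (restr K \<phi>)"
  let ?C2 = "centralizer sm I (restr I \<phi>)"
  define \<Phi> where "\<Phi> f = (restr K f, restr I f)" for f :: "'m \<Rightarrow> 'm"
  have \<phi>_invariant: "\<forall>x\<in>K. \<phi> x \<in> K" "\<forall>x\<in>I. \<phi> x \<in> I"
    using invariant \<phi> by (auto simp: centralizer_def)
  have C1: "?C1 = {g \<in> End_R sm K. \<forall>x\<in>K. g (\<phi> x) = \<phi> (g x)}"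
    and C2: "?C2 = {h \<in> End_R sm I. \<forall>x\<in>I. h (\<phi> x) = \<phi> (h x)}"
    using \<phi>_invariant by (simp_all add: centralizer_restr)
  have "\<Phi> ` ?C \<subseteq> ?C1 \<times> ?C2"
  proof (rule image_subsetI)
    fix f assume f: "f \<in> ?C"
    then have "restr K f \<in> End_R sm K" "restr I f \<in> End_R sm I"
      using invariant submodule_K submodule_I by (auto simp: centralizer_def intro: restr_End_R)
    with f \<phi>_invariant invariant show "\<Phi> f \<in> ?C1 \<times> ?C2"
      by (auto simp: \<Phi>_def C1 C2 centralizer_def restr_def)
  qed
  moreover have "inj_on \<Phi> ?C"
  proof (rule inj_onI)
    fix f g assume "f \<in> ?C" "g \<in> ?C" "\<Phi> f = \<Phi> g"
    then show "f = g"
      by (intro End_R_eqI) (simp_all add: \<Phi>_def centralizer_def restr_eq_iff)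
  qed
  moreover have "?C1 \<times> ?C2 \<subseteq> \<Phi> ` ?C"
  proof clarify
    fix g h assume "g \<in> ?C1" "h \<in> ?C2"
    then have g: "g \<in> End_R sm K" "\<forall>x\<in>K. g (\<phi> x) = \<phi> (g x)"
      and h: "h \<in> End_R sm I" "\<forall>x\<in>I. h (\<phi> x) = \<phi> (h x)"
      unfolding C1 C2 by auto
    have "glue g h \<in> ?C"
      using glue_End_R[OF g(1) h(1)] glue_commute[OF \<phi> \<phi>_invariant g(2) h(2)]
      by (simp add: centralizer_def)
    moreover have "\<Phi> (glue g h) = (g, h)"
      using restr_glue_K[OF g(1) h(1)] restr_glue_I[OF g(1) h(1)] by (simp add: \<Phi>_def)
    ultimately show "(g, h) \<in> \<Phi> ` ?C" by (metis image_eqI)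
  qed
  ultimately have "bij_betw \<Phi> ?C (?C1 \<times> ?C2)"
    by (simp add: bij_betw_def subset_antisym)
  moreover have "\<Phi> (e_mult UNIV f g) =
      (e_mult K (restr K f) (restr K g), e_mult I (restr I f) (restr I g))"
    if "g \<in> ?C" for f g
    using invariant that by (simp add: \<Phi>_def restr_e_mult)
  ultimately show ?thesis
    unfolding Zalg_iso_prod_def
    by (intro exI[of _ \<Phi>]) (simp add: \<Phi>_def restr_e_add restr_e_one restr_e_smult)
qed

end

theorem lemma5p1:
  fixes sm :: "'r::ring_1 \<Rightarrow> 'm::ab_group_add \<Rightarrow> 'm"
    and \<phi> :: "'m \<Rightarrow> 'm" and r :: nat
  assumes "left_module sm"
    and "\<phi> \<in> End_R sm UNIV"
    and "r \<ge> 1"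
    and "{x. (\<phi> ^^ r) x = 0} \<inter> range (\<phi> ^^ r) = {0}"
    and "\<forall>x. \<exists>a b. (\<phi> ^^ r) a = 0 \<and> b \<in> range (\<phi> ^^ r) \<and> x = a + b"
  shows "Zalg_iso_prod sm UNIV (centralizer sm UNIV \<phi>)
           {x. (\<phi> ^^ r) x = 0}
           (centralizer sm {x. (\<phi> ^^ r) x = 0} (restr {x. (\<phi> ^^ r) x = 0} \<phi>))
           (range (\<phi> ^^ r))
           (centralizer sm (range (\<phi> ^^ r)) (restr (range (\<phi> ^^ r)) \<phi>))"
proof -
  have power: "\<phi> ^^ r \<in> End_R sm UNIV"
    using assms(2) by (rule funpow_End_R_UNIV)
  interpret module_decomposition sm "{x. (\<phi> ^^ r) x = 0}" "range (\<phi> ^^ r)"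
    using assms(1,4,5) submodule_kernel[OF assms(1) power] submodule_range[OF power]
    by unfold_locales auto
  have "\<forall>f\<in>centralizer sm UNIV \<phi>.
          (\<forall>x\<in>{x. (\<phi> ^^ r) x = 0}. f x \<in> {x. (\<phi> ^^ r) x = 0}) \<and>
          (\<forall>x\<in>range (\<phi> ^^ r). f x \<in> range (\<phi> ^^ r))"
    using centralizer_kernel_funpow_closed centralizer_range_funpow_closed by blast
  then show ?thesis by (rule centralizer_iso_prod[OF assms(2)])
qed

end
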